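(* Let $U:\mathbb{R}^d\to\mathbb{R}$ be twice continuously differentiable with $\nabla U(0)=0$ and $\sup_x\|\mathrm{D}^2U(x)\|\le\mathtt{L}$, and assume there exist $\mathtt{m}>0$, $\mathtt{K}\ge0$ with $\mathrm{D}^2U(x)[y,y]\ge\mathtt{m}$ whenever $\|x\|\ge\mathtt{K}$, $\|y\|=1$. Let $\tilde{\mathtt{K}}=2\mathtt{K}(1+\mathtt{L}/\mathtt{m})$ and $\tilde{\mathtt{C}}=\mathtt{L}\tilde{\mathtt{K}}^2$. Then for all $x\in\mathbb{R}^d$, $$\langle\nabla U(x),x\rangle\ge(\mathtt{m}/2)\|x\|^2-\tilde{\mathtt{C}}\mathbb{1}_{B(0,\tilde{\mathtt{K}})}(x).$$
   Context: $B(0,K)=\{x\in\mathbb{R}^d:\|x\|<K\}$. *)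

theory Defs
  imports "HOL-Analysis.Analysis"
begin

end

theory Submission
  imports Defs
begin

text \<open>Put \<open>r = \<parallel>x\<parallel>\<close> and \<open>\<phi>(t) = \<langle>\<nabla>U(t x), x\<rangle>\<close>, so that \<open>\<phi>(0) = 0\<close> and
\<open>\<phi>'(t) = D\<^sup>2U(t x)[x, x]\<close>. This derivative is at least \<open>-L r\<^sup>2\<close> everywhere and at least
\<open>m r\<^sup>2\<close> once \<open>t r \<ge> K\<close>, so integrating over \<open>[0, 1]\<close> gives
\<open>\<langle>\<nabla>U(x), x\<rangle> \<ge> m r\<^sup>2 - a r\<close> with \<open>a = (L + m) K\<close>. Note that the radius of the ball is
\<open>2 a / m\<close>. Outside the ball the linear term is absorbed by half of the quadratic one; inside,
completing the square costs at most \<open>a\<^sup>2 / (2 m)\<close>, which is below \<open>L (2 a / m)\<^sup>2\<close>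
because \<open>m \<le> L\<close>.\<close>

lemma blinfun_inner_self_bound:
  fixes f :: "'a::real_inner \<Rightarrow>\<^sub>L 'a"
  shows "\<bar>blinfun_apply f v \<bullet> v\<bar> \<le> norm f * (norm v)\<^sup>2"
proof -
  have "\<bar>blinfun_apply f v \<bullet> v\<bar> \<le> norm (blinfun_apply f v) * norm v"
    by (rule Cauchy_Schwarz_ineq2)
  also have "\<dots> \<le> norm f * norm v * norm v"
    by (simp add: mult_right_mono norm_blinfun)
  finally show ?thesis
    by (simp add: power2_eq_square mult.assoc)
qed

lemma convexity_constant_le_norm_bound:
  fixes H :: "'a::euclidean_space \<Rightarrow> 'a \<Rightarrow>\<^sub>L 'a"
  assumes bound: "\<And>x. norm (H x) \<le> L"
    and "0 \<le> K"
    and convex_out: "\<And>x y. K \<le> norm x \<Longrightarrow> norm y = 1 \<Longrightarrow> m \<le> blinfun_apply (H x) y \<bullet> y"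
  shows "m \<le> L"
proof -
  obtain e :: 'a where e: "norm e = 1"
    using norm_Basis nonempty_Basis by blast
  have "m \<le> blinfun_apply (H (K *\<^sub>R e)) e \<bullet> e"
    using convex_out e \<open>0 \<le> K\<close> by simp
  also have "\<dots> \<le> norm (H (K *\<^sub>R e))"
    using blinfun_inner_self_bound[of "H (K *\<^sub>R e)" e] e by simp
  finally show ?thesis
    using bound by (rule order_trans)
qed

lemma has_real_derivative_inner_along_ray:
  fixes g :: "'a::real_inner \<Rightarrow> 'a" and H :: "'a \<Rightarrow> 'a \<Rightarrow>\<^sub>L 'a"
  assumes "\<And>x. (g has_derivative blinfun_apply (H x)) (at x)"
  shows "((\<lambda>t. g (t *\<^sub>R x) \<bullet> x) has_real_derivative blinfun_apply (H (t *\<^sub>R x)) x \<bullet> x) (at t)"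
proof -
  have "((\<lambda>t. g (t *\<^sub>R x)) has_derivative (\<lambda>h. blinfun_apply (H (t *\<^sub>R x)) (h *\<^sub>R x))) (at t)"
    using has_derivative_compose[OF has_derivative_scaleR_left[OF has_derivative_ident] assms]
    by (simp add: o_def)
  from has_derivative_inner_left[OF this, of x] show ?thesis
    by (rule has_derivative_imp_has_field_derivative) (simp add: blinfun.scaleR_right)
qed

lemma diff_ge_of_DERIV_ge:
  fixes f f' :: "real \<Rightarrow> real"
  assumes "a \<le> b"
    and "\<And>t. (f has_real_derivative f' t) (at t)"
    and "\<And>t. a < t \<Longrightarrow> t < b \<Longrightarrow> c \<le> f' t"
  shows "(b - a) * c \<le> f b - f a"
proof (cases "a = b")
  case False
  with assms obtain z where "a < z" "z < b" "f b - f a = (b - a) * f' z"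
    using MVT2[of a b f f'] by force
  with assms(3) show ?thesis
    by (simp add: mult_left_mono)
qed simp

lemma diff_ge_of_DERIV_ge_piecewise:
  fixes f f' :: "real \<Rightarrow> real"
  assumes "0 \<le> s" "s \<le> 1"
    and "\<And>t. (f has_real_derivative f' t) (at t)"
    and "\<And>t. - a \<le> f' t"
    and "\<And>t. s < t \<Longrightarrow> t < 1 \<Longrightarrow> b \<le> f' t"
  shows "b - (a + b) * s \<le> f 1 - f 0"
proof -
  have "(s - 0) * - a \<le> f s - f 0"
    using assms by (intro diff_ge_of_DERIV_ge)
  moreover have "(1 - s) * b \<le> f 1 - f s"
    using assms by (intro diff_ge_of_DERIV_ge)
  ultimately show ?thesis
    by (simp add: algebra_simps)
qed

lemma radial_inner_lower_bound:
  fixes g :: "'a::real_inner \<Rightarrow> 'a" and H :: "'a \<Rightarrow> 'a \<Rightarrow>\<^sub>L 'a"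
  assumes deriv: "\<And>x. (g has_derivative blinfun_apply (H x)) (at x)"
    and "g 0 = 0"
    and bound: "\<And>x. norm (H x) \<le> L"
    and "0 \<le> m" "0 \<le> K"
    and convex_out: "\<And>x y. K \<le> norm x \<Longrightarrow> norm y = 1 \<Longrightarrow> m \<le> blinfun_apply (H x) y \<bullet> y"
  shows "m * (norm x)\<^sup>2 - (L + m) * K * norm x \<le> g x \<bullet> x"
proof (cases "x = 0")
  case False
  define r where "r = norm x"
  define s where "s = min 1 (K / r)"
  have "0 < r"
    using False by (simp add: r_def)
  have s: "0 \<le> s" "s \<le> 1" "r * s \<le> K"
    using \<open>0 \<le> K\<close> \<open>0 < r\<close> by (auto simp: s_def min_def field_simps)
  have lower: "- (L * r\<^sup>2) \<le> blinfun_apply (H z) x \<bullet> x" for z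
    using blinfun_inner_self_bound[of "H z" x] bound[of z] mult_right_mono[of _ L "r\<^sup>2"]
    by (fastforce simp: r_def)
  have outer: "m * r\<^sup>2 \<le> blinfun_apply (H (t *\<^sub>R x)) x \<bullet> x" if "s < t" "t < 1" for t
  proof -
    have "K \<le> norm (t *\<^sub>R x)"
      using that s \<open>0 < r\<close> by (auto simp: s_def r_def min_def field_simps split: if_splits)
    moreover have "norm (x /\<^sub>R r) = 1"
      using \<open>0 < r\<close> by (simp add: r_def)
    ultimately have "m \<le> blinfun_apply (H (t *\<^sub>R x)) (x /\<^sub>R r) \<bullet> (x /\<^sub>R r)"
      by (rule convex_out)
    then show ?thesis
      using \<open>0 < r\<close> by (simp add: blinfun.scaleR_right power2_eq_square field_simps)
  qed
  have "m * r\<^sup>2 - (L * r\<^sup>2 + m * r\<^sup>2) * s \<le> g (1 *\<^sub>R x) \<bullet> x - g (0 *\<^sub>R x) \<bullet> x"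
    using s lower outer
    by (intro diff_ge_of_DERIV_ge_piecewise[OF _ _ has_real_derivative_inner_along_ray[OF deriv]])
  moreover have "(L + m) * r * (r * s) \<le> (L + m) * r * K"
    using s \<open>0 < r\<close> \<open>0 \<le> m\<close> order_trans[OF norm_ge_zero bound[of 0]]
    by (intro mult_left_mono mult_nonneg_nonneg) auto
  ultimately show ?thesis
    using \<open>g 0 = 0\<close> by (simp add: r_def power2_eq_square algebra_simps)
qed (simp add: \<open>g 0 = 0\<close>)

lemma quadratic_ge_completed_square:
  fixes m a r :: real
  assumes "0 < m"
  shows "(m / 2) * r\<^sup>2 - a\<^sup>2 / (2 * m) \<le> m * r\<^sup>2 - a * r"
proof -
  have "m * r\<^sup>2 - a * r - ((m / 2) * r\<^sup>2 - a\<^sup>2 / (2 * m)) = (m * r - a)\<^sup>2 / (2 * m)"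
    using assms by (simp add: field_simps power2_eq_square)
  moreover have "0 \<le> (m * r - a)\<^sup>2 / (2 * m)"
    using assms by simp
  ultimately show ?thesis
    by linarith
qed

lemma quadratic_ge_half_square:
  fixes m a r :: real
  assumes "0 < m" "0 \<le> r" "2 * a / m \<le> r"
  shows "(m / 2) * r\<^sup>2 \<le> m * r\<^sup>2 - a * r"
proof -
  have "r * a \<le> r * (m * r / 2)"
    using assms by (intro mult_left_mono) (auto simp: field_simps)
  then show ?thesis
    by (simp add: power2_eq_square algebra_simps)
qed

theorem lemma10:
  fixes U :: "'a::euclidean_space \<Rightarrow> real"
    and gradU :: "'a \<Rightarrow> 'a"
    and hessU :: "'a \<Rightarrow> 'a \<Rightarrow>\<^sub>L 'a"
    and L m K :: real
  assumes grad: "\<And>x. (U has_derivative (\<lambda>h. gradU x \<bullet> h)) (at x)"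
    and hess: "\<And>x. (gradU has_derivative blinfun_apply (hessU x)) (at x)"
    and hess_cont: "continuous_on UNIV hessU"
    and grad0: "gradU 0 = 0"
    and Lbound: "\<And>x. norm (hessU x) \<le> L"
    and m_pos: "m > 0"
    and K_nonneg: "K \<ge> 0"
    and convex_out: "\<And>x y. norm x \<ge> K \<Longrightarrow> norm y = 1 \<Longrightarrow> blinfun_apply (hessU x) y \<bullet> y \<ge> m"
  shows "\<forall>x. gradU x \<bullet> x \<ge> (m / 2) * (norm x)\<^sup>2
            - (L * (2 * K * (1 + L / m))\<^sup>2) * indicator (ball 0 (2 * K * (1 + L / m))) x"
proof
  fix x :: 'a
  define a where "a = (L + m) * K"
  have "m \<le> L"
    using Lbound K_nonneg convex_out by (rule convexity_constant_le_norm_bound)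
  have radius: "2 * K * (1 + L / m) = 2 * a / m"
    using m_pos by (simp add: a_def field_simps)
  have radial: "m * (norm x)\<^sup>2 - a * norm x \<le> gradU x \<bullet> x"
    unfolding a_def using hess grad0 Lbound m_pos K_nonneg convex_out
    by (intro radial_inner_lower_bound) auto
  have "a\<^sup>2 / (2 * m) \<le> L * (2 * a / m)\<^sup>2"
    using \<open>m \<le> L\<close> m_pos mult_left_mono[of m "8 * L" "a\<^sup>2"]
    by (simp add: field_simps power2_eq_square)
  then show "gradU x \<bullet> x \<ge> (m / 2) * (norm x)\<^sup>2
            - (L * (2 * K * (1 + L / m))\<^sup>2) * indicator (ball 0 (2 * K * (1 + L / m))) x"
    using radial quadratic_ge_completed_square[OF m_pos, of "norm x" a]
      quadratic_ge_half_square[OF m_pos norm_ge_zero, of a x]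
    unfolding radius by (auto simp: indicator_def)
qed

end
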